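(* Let $d\geq1$, $p\in[1,\infty)\setminus\{2\}$, and $\lambda_1,\dots,\lambda_d>0$. Define $g:(0,\infty)\to(0,\infty)$ by $$g(\beta)=\left(\frac{\sum_{i=1}^{d}\frac{1}{1+\beta^{1/p}\lambda_i}}{\sum_{i=1}^{d}\frac{\lambda_i}{1+\beta^{1/p}\lambda_i}}\right)^{\frac{p}{3p-1}}.$$ Then $g$ has a unique fixed point $\beta^*_{\mathrm{vol}}>0$, and for every initial value $\beta_0>0$ the iterates $\beta_{n+1}=g(\beta_n)$, $n=0,1,2,\dots$, satisfy $\lim_{n\to\infty}\beta_n=\beta^*_{\mathrm{vol}}$. *)

theory Defs
  imports "HOL-Analysis.Analysis"
begin

definition vol_map :: "nat \<Rightarrow> real \<Rightarrow> (nat \<Rightarrow> real) \<Rightarrow> real \<Rightarrow> real" where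
  "vol_map d p lam \<beta> =
     ((\<Sum>i=1..d. 1 / (1 + \<beta> powr (1/p) * lam i)) /
      (\<Sum>i=1..d. lam i / (1 + \<beta> powr (1/p) * lam i))) powr (p / (3*p - 1))"

end

theory Submission
  imports Defs
begin

text \<open>
  In the logarithmic variable \<open>t = ln \<beta>\<close> the map becomes
  \<open>t \<mapsto> q ln h(e\<^bsup>t/p\<^esup>)\<close> with \<open>q = p/(3p - 1)\<close> and \<open>h(s) = A(s)/B(s)\<close>, where
  \<open>A(s) = \<Sum>\<^sub>i 1/(1 + s \<lambda>\<^sub>i)\<close> and \<open>B(s) = \<Sum>\<^sub>i \<lambda>\<^sub>i/(1 + s \<lambda>\<^sub>i)\<close>.
  A Chebyshev-type symmetrisation shows that \<open>h\<close> is increasing, and the identity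
  \<open>A(s) + s B(s) = d\<close> gives \<open>h(s)/s = A(s)/(d - A(s))\<close>, which is decreasing because \<open>A\<close> is.
  Hence \<open>ln h\<close> is 1-Lipschitz as a function of \<open>ln s\<close>, so the conjugated map is
  Lipschitz with constant \<open>1/(3p - 1) \<le> 1/2\<close>, and Banach's fixed point theorem applies.
\<close>

lemma contraction_iterates_tendsto_fixpoint:
  fixes f :: "'a::metric_space \<Rightarrow> 'a"
  assumes "0 \<le> k" "k < 1" and lipschitz: "\<And>x y. dist (f x) (f y) \<le> k * dist x y"
    and "f a = a"
  shows "(\<lambda>n. (f ^^ n) x) \<longlonglongrightarrow> a"
proof -
  have bound: "dist ((f ^^ n) x) a \<le> k ^ n * dist x a" for n
  proof (induction n)
    case (Suc n)
    have "dist ((f ^^ Suc n) x) a = dist (f ((f ^^ n) x)) (f a)"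
      using \<open>f a = a\<close> by simp
    also have "\<dots> \<le> k * dist ((f ^^ n) x) a"
      by (rule lipschitz)
    also have "\<dots> \<le> k * (k ^ n * dist x a)"
      using Suc.IH \<open>0 \<le> k\<close> by (rule mult_left_mono)
    finally show ?case
      by simp
  qed simp
  have "(\<lambda>n. k ^ n * dist x a) \<longlonglongrightarrow> 0"
    using assms(1,2) by (intro tendsto_mult_left_zero LIMSEQ_power_zero) auto
  then have "(\<lambda>n. dist ((f ^^ n) x) a) \<longlonglongrightarrow> 0"
    by (rule Lim_null_comparison[rotated]) (simp add: bound)
  then show ?thesis
    by (rule tendsto_dist_iff[THEN iffD2])
qed

lemma positive_fixpoint_of_log_contraction:
  fixes V :: "real \<Rightarrow> real"
  assumes pos: "\<And>x. x > 0 \<Longrightarrow> V x > 0" and "0 \<le> k" "k < 1"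
    and lipschitz: "\<And>x y. dist (ln (V (exp x))) (ln (V (exp y))) \<le> k * dist x y"
  shows "\<exists>b>0. V b = b \<and> (\<forall>c>0. V c = c \<longrightarrow> c = b)
           \<and> (\<forall>x>0. (\<lambda>n. (V ^^ n) x) \<longlonglongrightarrow> b)"
proof -
  define G where "G t = ln (V (exp t))" for t
  have exp_G: "exp (G t) = V (exp t)" for t
    using pos[of "exp t"] by (simp add: G_def)
  have iterates: "(V ^^ n) (exp t) = exp ((G ^^ n) t)" for n t
    by (induction n) (simp_all add: exp_G)
  obtain a where "G a = a" and unique: "\<And>u. G u = u \<Longrightarrow> u = a"
    using banach_fix_type[of k G] assms(2,3) lipschitz unfolding G_def by metis
  show ?thesis
  proof (intro exI[of _ "exp a"] conjI allI impI)
    show "V (exp a) = exp a"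
      using \<open>G a = a\<close> exp_G[of a] by simp
    fix c :: real assume "c > 0" "V c = c"
    then have "G (ln c) = ln c"
      by (simp add: G_def)
    then show "c = exp a"
      using unique \<open>c > 0\<close> by force
  next
    fix x :: real assume "x > 0"
    have "(\<lambda>n. (G ^^ n) (ln x)) \<longlonglongrightarrow> a"
      using contraction_iterates_tendsto_fixpoint[of k G a] assms(2,3) lipschitz \<open>G a = a\<close>
      unfolding G_def by blast
    then have "(\<lambda>n. exp ((G ^^ n) (ln x))) \<longlonglongrightarrow> exp a"
      by (rule tendsto_exp)
    then show "(\<lambda>n. (V ^^ n) x) \<longlonglongrightarrow> exp a"
      using iterates[of _ "ln x"] \<open>x > 0\<close> by simp
  qed simp
qed

lemma sum_cross_le_of_pairwise:
  fixes u v x :: "'i \<Rightarrow> real"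
  assumes "\<And>i j. i \<in> I \<Longrightarrow> j \<in> I \<Longrightarrow> (x j - x i) * (u i * v j - v i * u j) \<le> 0"
  shows "(\<Sum>i\<in>I. u i) * (\<Sum>j\<in>I. x j * v j) \<le> (\<Sum>i\<in>I. v i) * (\<Sum>j\<in>I. x j * u j)"
proof -
  define D where "D i j = u i * (x j * v j) - v i * (x j * u j)" for i j
  have "(\<Sum>i\<in>I. u i) * (\<Sum>j\<in>I. x j * v j) - (\<Sum>i\<in>I. v i) * (\<Sum>j\<in>I. x j * u j)
      = (\<Sum>i\<in>I. \<Sum>j\<in>I. D i j)"
    by (simp add: D_def sum_product sum_subtractf)
  also have "\<dots> = (\<Sum>i\<in>I. \<Sum>j\<in>I. (D i j + D j i) / 2)"
    using sum.swap[of D I I] by (simp add: sum.distrib sum_divide_distrib[symmetric])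
  also have "\<dots> = (\<Sum>i\<in>I. \<Sum>j\<in>I. (x j - x i) * (u i * v j - v i * u j) / 2)"
    by (simp add: D_def algebra_simps)
  also have "\<dots> \<le> 0"
    using assms by (intro sum_nonpos) auto
  finally show ?thesis
    by simp
qed

lemma cross_fraction_diff:
  fixes a b c e :: "'a::field"
  assumes "a \<noteq> 0" "b \<noteq> 0" "c \<noteq> 0" "e \<noteq> 0"
  shows "1 / a * (1 / b) - 1 / c * (1 / e) = (c * e - a * b) * (1 / a * (1 / b) * (1 / c) * (1 / e))"
  using assms by (simp add: field_simps)

text \<open>
  With \<open>\<Lambda> = diag(\<lambda>\<^sub>i)\<close> these are \<open>tr (1 + s\<Lambda>)\<^sup>-\<^sup>1\<close> and \<open>tr \<Lambda>(1 + s\<Lambda>)\<^sup>-\<^sup>1\<close>;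
  \<^const>\<open>vol_map\<close> is their ratio at \<open>s = \<beta>\<^bsup>1/p\<^esup>\<close>, raised to the power \<open>p/(3p - 1)\<close>.
\<close>

definition resolvent_trace :: "'i set \<Rightarrow> ('i \<Rightarrow> real) \<Rightarrow> real \<Rightarrow> real" where
  "resolvent_trace I lam s = (\<Sum>i\<in>I. 1 / (1 + s * lam i))"

definition weighted_resolvent_trace :: "'i set \<Rightarrow> ('i \<Rightarrow> real) \<Rightarrow> real \<Rightarrow> real" where
  "weighted_resolvent_trace I lam s = (\<Sum>i\<in>I. lam i / (1 + s * lam i))"

definition resolvent_ratio :: "'i set \<Rightarrow> ('i \<Rightarrow> real) \<Rightarrow> real \<Rightarrow> real" where
  "resolvent_ratio I lam s = resolvent_trace I lam s / weighted_resolvent_trace I lam s"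

context
  fixes I :: "'i set" and lam :: "'i \<Rightarrow> real"
  assumes lam_pos: "\<And>i. i \<in> I \<Longrightarrow> lam i > 0"
begin

lemma resolvent_denominator_pos: "i \<in> I \<Longrightarrow> s \<ge> 0 \<Longrightarrow> 1 + s * lam i > 0"
  using lam_pos[of i] by (intro add_pos_nonneg) auto

lemma resolvent_trace_pos:
  "finite I \<Longrightarrow> I \<noteq> {} \<Longrightarrow> s \<ge> 0 \<Longrightarrow> resolvent_trace I lam s > 0"
  unfolding resolvent_trace_def using resolvent_denominator_pos by (intro sum_pos) auto

lemma weighted_resolvent_trace_pos:
  "finite I \<Longrightarrow> I \<noteq> {} \<Longrightarrow> s \<ge> 0 \<Longrightarrow> weighted_resolvent_trace I lam s > 0"
  unfolding weighted_resolvent_trace_def using resolvent_denominator_pos lam_pos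
  by (intro sum_pos) auto

lemma resolvent_ratio_pos:
  "finite I \<Longrightarrow> I \<noteq> {} \<Longrightarrow> s \<ge> 0 \<Longrightarrow> resolvent_ratio I lam s > 0"
  unfolding resolvent_ratio_def
  using resolvent_trace_pos weighted_resolvent_trace_pos by simp

lemma resolvent_trace_add_weighted:
  assumes "s \<ge> 0"
  shows "resolvent_trace I lam s + s * weighted_resolvent_trace I lam s = card I"
proof -
  have "1 / (1 + s * lam i) + s * (lam i / (1 + s * lam i)) = 1" if "i \<in> I" for i
    using resolvent_denominator_pos[OF that assms] by (simp add: field_simps)
  then have "resolvent_trace I lam s + s * weighted_resolvent_trace I lam s = (\<Sum>i\<in>I. 1)"
    unfolding resolvent_trace_def weighted_resolvent_trace_def
    by (simp add: sum_distrib_left sum.distrib[symmetric])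
  then show ?thesis
    by simp
qed

lemma resolvent_trace_antimono:
  assumes "0 \<le> s1" "s1 \<le> s2"
  shows "resolvent_trace I lam s2 \<le> resolvent_trace I lam s1"
  unfolding resolvent_trace_def
proof (rule sum_mono)
  fix i assume "i \<in> I"
  then show "1 / (1 + s2 * lam i) \<le> 1 / (1 + s1 * lam i)"
    using resolvent_denominator_pos[of i s1] resolvent_denominator_pos[of i s2] lam_pos[of i] assms
    by (intro divide_left_mono) (auto intro: mult_right_mono)
qed

lemma resolvent_ratio_mono:
  assumes "finite I" "I \<noteq> {}" "0 \<le> s1" "s1 \<le> s2"
  shows "resolvent_ratio I lam s1 \<le> resolvent_ratio I lam s2"
proof -
  define w1 where "w1 i = 1 / (1 + s1 * lam i)" for i
  define w2 where "w2 i = 1 / (1 + s2 * lam i)" for i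
  have den: "1 + s1 * lam k > 0" "1 + s2 * lam k > 0" if "k \<in> I" for k
    using resolvent_denominator_pos[OF that] assms(3,4) by auto
  \<comment> \<open>Raising \<open>s\<close> shifts the weights \<open>1/(1 + s \<lambda>\<^sub>i)\<close> towards the small \<open>\<lambda>\<^sub>i\<close>.\<close>
  have "(lam j - lam i) * (w1 i * w2 j - w2 i * w1 j) \<le> 0" if "i \<in> I" "j \<in> I" for i j
  proof -
    have "w1 i * w2 j - w2 i * w1 j
        = ((1 + s2 * lam i) * (1 + s1 * lam j) - (1 + s1 * lam i) * (1 + s2 * lam j))
          * (w1 i * w2 j * w2 i * w1 j)"
      unfolding w1_def w2_def using den[OF that(1)] den[OF that(2)]
      by (intro cross_fraction_diff) auto
    also have "(1 + s2 * lam i) * (1 + s1 * lam j) - (1 + s1 * lam i) * (1 + s2 * lam j)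
        = (s2 - s1) * (lam i - lam j)"
      by (simp add: algebra_simps)
    finally have cross: "w1 i * w2 j - w2 i * w1 j
        = (s2 - s1) * (lam i - lam j) * (w1 i * w2 j * w2 i * w1 j)" .
    have "(lam j - lam i) * (w1 i * w2 j - w2 i * w1 j)
        = - ((s2 - s1) * (lam i - lam j)\<^sup>2 * (w1 i * w2 j * w2 i * w1 j))"
      unfolding cross by (simp add: power2_eq_square algebra_simps)
    also have "\<dots> \<le> 0"
      unfolding w1_def w2_def using den[OF that(1)] den[OF that(2)] assms(4) by simp
    finally show ?thesis .
  qed
  then have "resolvent_trace I lam s1 * weighted_resolvent_trace I lam s2
      \<le> resolvent_trace I lam s2 * weighted_resolvent_trace I lam s1"
    using sum_cross_le_of_pairwise[of I lam w1 w2]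
    by (simp add: resolvent_trace_def weighted_resolvent_trace_def w1_def w2_def)
  then show ?thesis
    using weighted_resolvent_trace_pos[of s1] weighted_resolvent_trace_pos[of s2] assms
    by (simp add: resolvent_ratio_def divide_simps mult.commute)
qed

lemma resolvent_ratio_div_antimono:
  assumes "finite I" "I \<noteq> {}" "0 < s1" "s1 \<le> s2"
  shows "resolvent_ratio I lam s2 * s1 \<le> resolvent_ratio I lam s1 * s2"
proof -
  let ?A = "resolvent_trace I lam" and ?B = "weighted_resolvent_trace I lam"
  have "s * ?B s = card I - ?A s" if "s \<ge> 0" for s
    using resolvent_trace_add_weighted[OF that] by simp
  moreover have "?A s2 * (card I - ?A s1) \<le> ?A s1 * (card I - ?A s2)"
    using resolvent_trace_antimono[of s1 s2] assms by (simp add: algebra_simps mult_left_mono)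
  ultimately have "?A s2 * (s1 * ?B s1) \<le> ?A s1 * (s2 * ?B s2)"
    using assms by simp
  then show ?thesis
    using weighted_resolvent_trace_pos[of s1] weighted_resolvent_trace_pos[of s2] assms
    by (simp add: resolvent_ratio_def divide_simps algebra_simps)
qed

lemma resolvent_ratio_log_lipschitz:
  assumes "finite I" "I \<noteq> {}"
  shows "dist (ln (resolvent_ratio I lam (exp x))) (ln (resolvent_ratio I lam (exp y))) \<le> dist x y"
proof -
  have ordered: "\<bar>ln (resolvent_ratio I lam (exp y)) - ln (resolvent_ratio I lam (exp x))\<bar> \<le> y - x"
    if "x \<le> y" for x y
  proof -
    let ?h = "resolvent_ratio I lam"
    have pos: "?h (exp x) > 0" "?h (exp y) > 0"
      using resolvent_ratio_pos assms by auto
    have "?h (exp x) \<le> ?h (exp y)"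
      using resolvent_ratio_mono assms that by simp
    moreover have "?h (exp y) * exp x \<le> ?h (exp x) * exp y"
      using resolvent_ratio_div_antimono assms that by simp
    then have "ln (?h (exp y)) + x \<le> ln (?h (exp x)) + y"
      using pos by (metis exp_le_cancel_iff exp_add exp_ln)
    ultimately show ?thesis
      using pos by (simp add: abs_le_iff)
  qed
  show ?thesis
    using ordered[of x y] ordered[of y x] by (cases "x \<le> y") (simp_all add: dist_real_def abs_minus_commute)
qed

end

lemma vol_map_eq_resolvent_ratio:
  "vol_map d p lam \<beta> = resolvent_ratio {1..d} lam (\<beta> powr (1/p)) powr (p / (3*p - 1))"
  by (simp add: vol_map_def resolvent_ratio_def resolvent_trace_def weighted_resolvent_trace_def)

lemma vol_map_pos:
  assumes "d \<ge> 1" and "\<And>i. i \<in> {1..d} \<Longrightarrow> lam i > 0"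
  shows "vol_map d p lam \<beta> > 0"
proof -
  have "resolvent_ratio {1..d} lam (\<beta> powr (1/p)) > 0"
    using assms by (intro resolvent_ratio_pos) auto
  then show ?thesis
    by (simp add: vol_map_eq_resolvent_ratio)
qed

lemma vol_map_log_lipschitz:
  assumes "d \<ge> 1" and "p > 1/3" and "\<And>i. i \<in> {1..d} \<Longrightarrow> lam i > 0"
  shows "dist (ln (vol_map d p lam (exp x))) (ln (vol_map d p lam (exp y))) \<le> dist x y / (3*p - 1)"
proof -
  define q where "q = p / (3*p - 1)"
  have "q > 0" "p > 0"
    using assms(2) by (auto simp: q_def)
  have log_vol_map: "ln (vol_map d p lam (exp t)) = q * ln (resolvent_ratio {1..d} lam (exp (t / p)))" for t
    using resolvent_ratio_pos[of "{1..d}" lam] assms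
    by (simp add: vol_map_eq_resolvent_ratio q_def powr_def)
  have "dist (ln (vol_map d p lam (exp x))) (ln (vol_map d p lam (exp y)))
      = q * dist (ln (resolvent_ratio {1..d} lam (exp (x / p))))
                 (ln (resolvent_ratio {1..d} lam (exp (y / p))))"
    using \<open>q > 0\<close> by (simp add: log_vol_map dist_real_def right_diff_distrib[symmetric] abs_mult)
  also have "\<dots> \<le> q * dist (x / p) (y / p)"
    using resolvent_ratio_log_lipschitz[of "{1..d}" lam] assms \<open>q > 0\<close>
    by (intro mult_left_mono) auto
  also have "\<dots> = dist x y / (3*p - 1)"
    using \<open>p > 0\<close> by (simp add: q_def dist_real_def diff_divide_distrib[symmetric])
  finally show ?thesis .
qed

theorem theorem3:
  fixes d :: nat and p :: real and lam :: "nat \<Rightarrow> real"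
  assumes "d \<ge> 1" and "p \<ge> 1" and "p \<noteq> 2"
    and "\<And>i. i \<in> {1..d} \<Longrightarrow> lam i > 0"
  shows "\<exists>b>0. vol_map d p lam b = b
            \<and> (\<forall>c>0. vol_map d p lam c = c \<longrightarrow> c = b)
            \<and> (\<forall>\<beta>0>0. (\<lambda>n. ((vol_map d p lam) ^^ n) \<beta>0) \<longlonglongrightarrow> b)"
proof (rule positive_fixpoint_of_log_contraction)
  show "vol_map d p lam x > 0" for x
    using vol_map_pos assms(1,4) by blast
  show "0 \<le> 1 / (3*p - 1)" and "1 / (3*p - 1) < 1"
    using assms(2) by auto
  show "dist (ln (vol_map d p lam (exp x))) (ln (vol_map d p lam (exp y))) \<le> 1 / (3*p - 1) * dist x y"
    for x y
    using vol_map_log_lipschitz[of d p lam x y] assms(1,2,4) by simp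
qed

end
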